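(* Let $a,d\in\mathbb{C}\setminus\{0\}$ and $b=0$. Then there exists $\varepsilon>0$ (depending on $a$ and $d$) such that for every $f\in\mathbb{C}$ with $|f|<\varepsilon$, the node-wise equi-M sets of the system $z_1(n+1)=(az_1(n))^2+c$, $z_2(n+1)=(dz_1(n)+fz_2(n))^2+c$ coincide: $\mathcal{M}(z_1)=\mathcal{M}(z_2)$.
   Context: For $c\in\mathbb{C}$, the 2D coupled quadratic system with connectivity matrix $A=\begin{pmatrix}a&b\\ d&f\end{pmatrix}$ is the iteration $z_1(n+1)=(az_1(n)+bz_2(n))^2+c$, $z_2(n+1)=(dz_1(n)+fz_2(n))^2+c$. The critical orbit is the orbit with $z_1(0)=z_2(0)=0$. The node-wise equi-M set $\mathcal{M}(z_k)$ ($k=1,2$) is the set of $c\in\mathbb{C}$ for which the sequence $(z_k(n))_{n\ge0}$ of the critical orbit is bounded. *)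

theory Defs
  imports "HOL-Analysis.Analysis"
begin

fun crit_orbit :: "complex \<Rightarrow> complex \<Rightarrow> complex \<Rightarrow> complex \<Rightarrow> complex \<Rightarrow> nat \<Rightarrow> complex \<times> complex" where
  "crit_orbit a b d f c 0 = (0, 0)"
| "crit_orbit a b d f c (Suc n) =
     (let (z1, z2) = crit_orbit a b d f c n
      in ((a * z1 + b * z2)^2 + c, (d * z1 + f * z2)^2 + c))"

definition equiM :: "complex \<Rightarrow> complex \<Rightarrow> complex \<Rightarrow> complex \<Rightarrow> nat \<Rightarrow> complex set" where
  "equiM a b d f k = {c. bounded (range (\<lambda>n. (if k = 1 then fst else snd) (crit_orbit a b d f c n)))}"

end

theory Submission
  imports Defs
begin

text \<open>For \<open>b = 0\<close> node 1 is an uncoupled quadratic iteration, and \<open>a\<^sup>2 z\<^sub>1\<close> is the critical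
  orbit of \<open>z \<mapsto> z\<^sup>2 + a\<^sup>2 c\<close>; the escape criterion bounds \<open>c\<close> and \<open>z\<^sub>1\<close> by \<open>2/|a|\<^sup>2\<close> on
  \<open>\<M>(z\<^sub>1)\<close>. If \<open>z\<^sub>2\<close> is bounded, taking
  square roots and \<open>d \<noteq> 0\<close> bound \<open>z\<^sub>1\<close>, for every \<open>f\<close>. Conversely, if \<open>z\<^sub>1\<close> is bounded and \<open>|f|\<close>
  is below the reciprocal of an a-priori bound \<open>R\<close>, then \<open>|z\<^sub>2| \<le> R\<close> is preserved by the
  iteration.\<close>

lemma crit_orbit_fst_b0:
  "fst (crit_orbit a 0 d f c (Suc n)) = (a * fst (crit_orbit a 0 d f c n))\<^sup>2 + c"
  by (simp add: split_def Let_def)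

lemma crit_orbit_snd_b0:
  "snd (crit_orbit a 0 d f c (Suc n)) =
     (d * fst (crit_orbit a 0 d f c n) + f * snd (crit_orbit a 0 d f c n))\<^sup>2 + c"
  by (simp add: split_def Let_def)

lemma quadratic_escape_step:
  fixes y c :: complex
  assumes "t \<le> norm y" "2 < t" "norm c < t"
  shows "norm y + (t * (t - 1) - norm c) \<le> norm (y\<^sup>2 + c)"
proof -
  have "t * (t - 1) \<le> norm y * (norm y - 1)"
    using assms by (intro mult_mono) auto
  moreover have "norm y ^ 2 - norm c \<le> norm (y\<^sup>2 + c)"
    using norm_diff_ineq[of "y\<^sup>2" c] by (simp add: norm_power)
  ultimately show ?thesis
    by (simp add: power2_eq_square algebra_simps)
qed

lemma quadratic_orbit_escapes_linearly:
  fixes x :: "nat \<Rightarrow> complex"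
  assumes step: "\<And>n. x (Suc n) = (x n)\<^sup>2 + c"
    and t: "norm (x m) = t" "2 < t" "norm c < t"
  shows "t + real k * (t * (t - 1) - norm c) \<le> norm (x (m + k))"
proof (induction k)
  case 0
  then show ?case using t by simp
next
  case (Suc k)
  have "t * 1 \<le> t * (t - 1)"
    using t by (intro mult_left_mono) auto
  then have "0 < t * (t - 1) - norm c"
    using t by linarith
  then have "0 \<le> real k * (t * (t - 1) - norm c)"
    by simp
  then have "t \<le> norm (x (m + k))"
    using Suc by linarith
  then have "norm (x (m + k)) + (t * (t - 1) - norm c) \<le> norm (x (m + Suc k))"
    using quadratic_escape_step[of t "x (m + k)" c] t step by simp
  with Suc show ?case
    by (simp add: algebra_simps)
qed

lemma quadratic_orbit_unbounded:
  fixes x :: "nat \<Rightarrow> complex"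
  assumes step: "\<And>n. x (Suc n) = (x n)\<^sup>2 + c"
    and escaped: "2 < norm (x m)" "norm c < norm (x m)"
  shows "\<not> bounded (range x)"
proof
  assume "bounded (range x)"
  then obtain B where B: "\<And>n. norm (x n) \<le> B"
    by (auto simp: bounded_iff)
  define t where "t = norm (x m)"
  define \<delta> where "\<delta> = t * (t - 1) - norm c"
  have "t * 1 \<le> t * (t - 1)"
    using escaped unfolding t_def by (intro mult_left_mono) auto
  then have "0 < \<delta>"
    using escaped unfolding \<delta>_def t_def by linarith
  then obtain k :: nat where k: "B < real k * \<delta>"
    using ex_less_of_nat_mult by blast
  have "t + real k * \<delta> \<le> norm (x (m + k))"
    using quadratic_orbit_escapes_linearly[where x = x and c = c, OF step, of m t] escaped
    unfolding t_def \<delta>_def by simp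
  with B[of "m + k"] k show False
    unfolding t_def by (smt (verit) norm_ge_zero)
qed

lemma bounded_critical_quadratic_orbit:
  fixes x :: "nat \<Rightarrow> complex"
  assumes start: "x 0 = 0" and step: "\<And>n. x (Suc n) = (x n)\<^sup>2 + c"
    and bounded: "bounded (range x)"
  shows "norm c \<le> 2" and "norm (x n) \<le> 2"
proof -
  show c_le_2: "norm c \<le> 2"
  proof (rule ccontr)
    assume "\<not> norm c \<le> 2"
    then have "2 < norm c" by simp
    moreover have "x 2 = c\<^sup>2 + c"
      using step[of 0] step[of 1] start by (simp add: numeral_2_eq_2)
    moreover have "norm c ^ 2 - norm c \<le> norm (c\<^sup>2 + c)"
      using norm_diff_ineq[of "c\<^sup>2" c] by (simp add: norm_power)
    moreover have "norm c * 2 < norm c * norm c"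
      using \<open>2 < norm c\<close> by (intro mult_strict_left_mono) auto
    ultimately have "norm c < norm (x 2)" "2 < norm (x 2)"
      by (simp_all add: power2_eq_square)
    with quadratic_orbit_unbounded[where x = x and c = c, OF step] bounded show False
      by blast
  qed
  show "norm (x n) \<le> 2"
    using quadratic_orbit_unbounded[where x = x and c = c, OF step, of n] c_le_2 bounded by force
qed

lemma bounded_input_if_bounded_coupled_orbit:
  fixes u w :: "nat \<Rightarrow> complex"
  assumes step: "\<And>n. w (Suc n) = (d * u n + f * w n)\<^sup>2 + c"
    and "d \<noteq> 0" and "bounded (range w)"
  shows "bounded (range u)"
proof -
  obtain B where B: "\<And>n. norm (w n) \<le> B"
    using \<open>bounded (range w)\<close> by (auto simp: bounded_iff)
  have "norm d * norm (u n) \<le> sqrt (B + norm c) + norm f * B" for n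
  proof -
    have "norm (d * u n + f * w n) ^ 2 = norm (w (Suc n) - c)"
      using step[of n] by (simp add: norm_power)
    also have "\<dots> \<le> B + norm c"
      using B[of "Suc n"] norm_triangle_ineq4[of "w (Suc n)" c] by linarith
    finally have "norm (d * u n + f * w n) \<le> sqrt (B + norm c)"
      using real_le_rsqrt by blast
    moreover have "norm (d * u n) \<le> norm (d * u n + f * w n) + norm (f * w n)"
      using norm_triangle_ineq4[of "d * u n + f * w n" "f * w n"] by simp
    moreover have "norm (f * w n) \<le> norm f * B"
      using B[of n] by (simp add: norm_mult mult_left_mono)
    ultimately show ?thesis
      by (simp add: norm_mult)
  qed
  then have "norm (u n) \<le> (sqrt (B + norm c) + norm f * B) / norm d" for n
    using \<open>d \<noteq> 0\<close> by (simp add: field_simps mult.commute)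
  then show ?thesis
    by (auto simp: bounded_iff)
qed

lemma coupled_orbit_bounded_if_small_coupling:
  fixes u w :: "nat \<Rightarrow> complex"
  assumes start: "w 0 = 0" and step: "\<And>n. w (Suc n) = (u n + f * w n)\<^sup>2 + c"
    and u_le: "\<And>n. norm (u n) \<le> K" and c_le: "norm c \<le> C" and "0 \<le> C"
    and f_small: "norm f * ((K + 1)\<^sup>2 + C) \<le> 1"
  shows "norm (w n) \<le> (K + 1)\<^sup>2 + C"
proof (induction n)
  case 0
  then show ?case using start \<open>0 \<le> C\<close> by simp
next
  case (Suc n)
  have "norm f * norm (w n) \<le> 1"
    using Suc f_small by (smt (verit) mult_left_mono norm_ge_zero)
  then have "norm (u n + f * w n) \<le> K + 1"
    using norm_triangle_ineq[of "u n" "f * w n"] u_le[of n] by (simp add: norm_mult)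
  then have "norm (u n + f * w n) ^ 2 \<le> (K + 1)\<^sup>2"
    by (intro power_mono) auto
  moreover have "norm ((u n + f * w n)\<^sup>2 + c) \<le> norm (u n + f * w n) ^ 2 + norm c"
    using norm_triangle_ineq[of "(u n + f * w n)\<^sup>2" c] by (simp add: norm_power)
  ultimately show ?case
    using step[of n] c_le by simp
qed

lemma equiM_1_bounds:
  assumes "a \<noteq> 0" and "c \<in> equiM a 0 d f 1"
  shows "norm c \<le> 2 / norm a ^ 2"
    and "norm (fst (crit_orbit a 0 d f c n)) \<le> 2 / norm a ^ 2"
proof -
  define x where "x n = a\<^sup>2 * fst (crit_orbit a 0 d f c n)" for n
  have step: "x (Suc n) = (x n)\<^sup>2 + a\<^sup>2 * c" for n
    unfolding x_def crit_orbit_fst_b0 by (simp add: algebra_simps power2_eq_square)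
  obtain B where "\<And>n. norm (fst (crit_orbit a 0 d f c n)) \<le> B"
    using assms(2) by (auto simp: equiM_def bounded_iff)
  then have "norm (x n) \<le> norm a ^ 2 * B" for n
    unfolding x_def by (simp add: norm_mult norm_power mult_left_mono)
  then have "bounded (range x)"
    by (auto simp: bounded_iff)
  then have "norm (a\<^sup>2 * c) \<le> 2" "norm (x n) \<le> 2"
    using bounded_critical_quadratic_orbit[of x, OF _ step] by (simp_all add: x_def)
  then show "norm c \<le> 2 / norm a ^ 2" "norm (fst (crit_orbit a 0 d f c n)) \<le> 2 / norm a ^ 2"
    using \<open>a \<noteq> 0\<close> by (simp_all add: x_def norm_mult norm_power field_simps)
qed

theorem mainTheorem11:
  fixes a d :: complex
  assumes "a \<noteq> 0" and "d \<noteq> 0"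
  shows "\<exists>\<epsilon>>0. \<forall>f::complex. norm f < \<epsilon> \<longrightarrow> equiM a 0 d f 1 = equiM a 0 d f 2"
proof (intro exI conjI allI impI)
  define C where "C = 2 / norm a ^ 2"
  define R where "R = (norm d * C + 1)\<^sup>2 + C"
  have "0 \<le> C"
    unfolding C_def by simp
  then have "0 < norm d * C + 1"
    by (simp add: add_nonneg_pos)
  with \<open>0 \<le> C\<close> have "0 < R"
    unfolding R_def by (simp add: add_pos_nonneg)
  then show "0 < 1 / R" by simp
  fix f :: complex
  assume "norm f < 1 / R"
  then have f_small: "norm f * R \<le> 1"
    using \<open>0 < R\<close> by (simp add: field_simps)
  let ?z1 = "\<lambda>c n. fst (crit_orbit a 0 d f c n)" and ?z2 = "\<lambda>c n. snd (crit_orbit a 0 d f c n)"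
  show "equiM a 0 d f 1 = equiM a 0 d f 2"
  proof (intro set_eqI iffI)
    fix c assume c: "c \<in> equiM a 0 d f 1"
    have "norm (d * ?z1 c n) \<le> norm d * C" for n
      using equiM_1_bounds(2)[OF \<open>a \<noteq> 0\<close> c, of n] unfolding C_def norm_mult
      by (rule mult_left_mono) simp
    then have "norm (?z2 c n) \<le> R" for n
      using coupled_orbit_bounded_if_small_coupling[of "?z2 c" "\<lambda>n. d * ?z1 c n" f c "norm d * C" C]
        crit_orbit_snd_b0 equiM_1_bounds(1)[OF \<open>a \<noteq> 0\<close> c] f_small \<open>0 \<le> C\<close>
      unfolding R_def C_def by simp
    then show "c \<in> equiM a 0 d f 2"
      unfolding equiM_def by (auto simp: bounded_iff)
  next
    fix c assume "c \<in> equiM a 0 d f 2"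
    then show "c \<in> equiM a 0 d f 1"
      using bounded_input_if_bounded_coupled_orbit[of "?z2 c" d "?z1 c" f c, OF crit_orbit_snd_b0 \<open>d \<noteq> 0\<close>]
      by (simp add: equiM_def)
  qed
qed

end
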